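(* Let $\|\cdot\|$ be any norm on $\mathbb R^d$ with dual norm $\|\cdot\|_*$, and let $\alpha\in(0,1)$, $\eta>0$, $T\in\mathbb N$. Let $f:\mathbb R^d\to\mathbb R$ be differentiable, bounded below, with $L_{\|\cdot\|}(f)<\infty$, and $\Delta_0=f(x_0)-\inf f$. Let $f_0,\dots,f_{T-1}$ be mutually independent random differentiable functions with $\mathbb E[\nabla f_t(x)]=\nabla f(x)$ for all $t,x$ and $\sup_{t,x}\mathbb E\|\nabla f_t(x)-\nabla f(x)\|_*^2\le\sigma_{\|\cdot\|_*}^2$. Let $(x_t)$ be generated by normalized steepest descent with momentum under $\|\cdot\|$. Then $$\mathbb E\,\frac1T\sum_{t=0}^{T-1}\|\nabla f(x_t)\|_*\le\frac{\Delta_0}{\eta T}+\frac{2\eta}{\alpha}L_{\|\cdot\|}(f)+\frac{2}{\alpha T}\sigma_{\|\cdot\|_*}+2\sigma_{\|\cdot\|_*}\min\big(1,\alpha^{1/2}\psi(\|\cdot\|_*,\|\cdot\|_2)\big),$$ where $\psi(\|\cdot\|_*,\|\cdot\|_2)=\sup_{x\ne0}\frac{\|x\|_*}{\|x\|_2}\cdot\sup_{x\ne0}\frac{\|x\|_2}{\|x\|_*}$.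
   Context: For a norm $\|\cdot\|$ with dual $\|\cdot\|_*$, $L_{\|\cdot\|}(f)$ is the smallest $L$ with $\|\nabla f(x)-\nabla f(y)\|_*\le L\|x-y\|$ for all $x,y$. Normalized steepest descent with momentum under a norm $\|\cdot\|$: given $x_0$, set $g_t=\nabla f_t(x_t)$, $m_0=g_0$, $m_t=(1-\alpha)m_{t-1}+\alpha g_t$ for $t\ge1$, $u_t\in\arg\max_{\|u\|\le1}\langle m_t,u\rangle$, $x_{t+1}=x_t-\eta u_t$. *)

theory Defs
  imports "HOL-Probability.Probability"
begin

definition is_norm :: "('a::euclidean_space \<Rightarrow> real) \<Rightarrow> bool" where
  "is_norm N \<longleftrightarrow> (\<forall>x. N x = 0 \<longleftrightarrow> x = 0) \<and> (\<forall>x y. N (x + y) \<le> N x + N y)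
     \<and> (\<forall>c x. N (c *\<^sub>R x) = \<bar>c\<bar> * N x)"

text \<open>Dual norm, identifying the dual space with the space itself via the inner product.\<close>
definition dual_norm :: "('a::euclidean_space \<Rightarrow> real) \<Rightarrow> 'a \<Rightarrow> real" where
  "dual_norm N g = Sup {g \<bullet> u | u. N u \<le> 1}"

definition smooth_const :: "('a::euclidean_space \<Rightarrow> real) \<Rightarrow> ('a \<Rightarrow> 'a) \<Rightarrow> real" where
  "smooth_const N g = Inf {L. \<forall>x y. dual_norm N (g x - g y) \<le> L * N (x - y)}"

definition psi :: "('a::euclidean_space \<Rightarrow> real) \<Rightarrow> real" where
  "psi N = (SUP x\<in>-{0}. dual_norm N x / norm x) * (SUP x\<in>-{0}. norm x / dual_norm N x)"

text \<open>Given a selection rule sel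
  (sel t m is the chosen maximiser u_t of <m,u> over N u <= 1), step size eta,
  momentum alpha, start x0 and gradient oracles Gs t (gradient of f_t),
  nsdm ... t = (x_t, m_t).\<close>
primrec nsdm :: "(nat \<Rightarrow> 'a \<Rightarrow> 'a) \<Rightarrow> real \<Rightarrow> real \<Rightarrow> 'a::real_vector \<Rightarrow> (nat \<Rightarrow> 'a \<Rightarrow> 'a)
    \<Rightarrow> nat \<Rightarrow> 'a \<times> 'a" where
  "nsdm sel \<alpha> \<eta> x0 Gs 0 = (x0, Gs 0 x0)"
| "nsdm sel \<alpha> \<eta> x0 Gs (Suc t) =
     (let (x, m) = nsdm sel \<alpha> \<eta> x0 Gs t;
          x' = x - \<eta> *\<^sub>R sel t m
      in (x', (1 - \<alpha>) *\<^sub>R m + \<alpha> *\<^sub>R Gs (Suc t) x'))"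

end

theory Submission
  imports Defs
begin

text \<open>Let eps t = m t - g (x t) be the momentum error. Since u t maximises the pairing with
  m t over the unit ball, the descent inequality gives
  eta * ||g (x t)||_* <= f (x t) - f (x (t+1)) + L eta^2 + 2 eta ||eps t||_*, and telescoping
  reduces the theorem to bounding E ||eps t||_*. The error splits into a drift term of size
  at most (1 - alpha) L eta / alpha, because consecutive iterates are eta apart, and the
  exponential moving average nu t of the gradient noises xi s = g_s (x s) - g (x s).
  Averaging gives E ||nu t||_* <= sigma directly. Alternatively, nu t is (1 - alpha)^t xi 0 plus
  an average started at zero of xi 1, ..., xi t; by independence these are martingale
  differences, so that average has Euclidean second moment at most alpha times theirs, and
  passing from ||.||_* to the Euclidean norm and back costs the factor psi. Summing the
  weights (1 - alpha)^t over t produces the term 2 sigma / (alpha T).\<close>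

section \<open>Norms given as functions, and their duals\<close>

context
  fixes N :: "'a::euclidean_space \<Rightarrow> real"
  assumes N: "is_norm N"
begin

lemma is_norm_eq_0_iff: "N x = 0 \<longleftrightarrow> x = 0"
  using N unfolding is_norm_def by blast

lemma is_norm_triangle: "N (x + y) \<le> N x + N y"
  using N unfolding is_norm_def by blast

lemma is_norm_scaleR: "N (c *\<^sub>R x) = \<bar>c\<bar> * N x"
  using N unfolding is_norm_def by blast

lemma is_norm_zero [simp]: "N 0 = 0"
  using is_norm_eq_0_iff by blast

lemma is_norm_minus: "N (- x) = N x"
  using is_norm_scaleR[of "-1" x] by simp

lemma is_norm_nonneg: "0 \<le> N x"
  using is_norm_triangle[of x "- x"] is_norm_minus[of x] by simp

lemma is_norm_pos: "x \<noteq> 0 \<Longrightarrow> 0 < N x"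
  using is_norm_eq_0_iff is_norm_nonneg by (simp add: order_less_le)

lemma is_norm_diff: "N x - N y \<le> N (x - y)"
  using is_norm_triangle[of "x - y" y] by simp

lemma is_norm_sum: "N (sum h A) \<le> (\<Sum>a\<in>A. N (h a))"
  by (induction A rule: infinite_finite_induct) (auto intro: order_trans[OF is_norm_triangle])

lemma is_norm_le_norm: "\<exists>C>0. \<forall>x. N x \<le> C * norm x"
proof -
  define C where "C = 1 + (\<Sum>b\<in>Basis. N b)"
  have "N x \<le> C * norm x" for x
  proof -
    have "N x = N (\<Sum>b\<in>Basis. (x \<bullet> b) *\<^sub>R b)" by (simp add: euclidean_representation)
    also have "\<dots> \<le> (\<Sum>b\<in>Basis. \<bar>x \<bullet> b\<bar> * N b)"
      using is_norm_sum[of "\<lambda>b. (x \<bullet> b) *\<^sub>R b" Basis] by (simp add: is_norm_scaleR)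
    also have "\<dots> \<le> norm x * (\<Sum>b\<in>Basis. N b)"
      unfolding sum_distrib_left
      by (intro sum_mono mult_right_mono) (auto simp: Basis_le_norm is_norm_nonneg)
    also have "\<dots> \<le> C * norm x"
      by (simp add: C_def sum_distrib_left[symmetric] algebra_simps)
    finally show ?thesis .
  qed
  moreover have "C > 0" unfolding C_def by (simp add: add_pos_nonneg sum_nonneg is_norm_nonneg)
  ultimately show ?thesis by blast
qed

lemma is_norm_continuous: "continuous_on UNIV N"
proof -
  obtain C where C: "C > 0" "\<And>x. N x \<le> C * norm x" using is_norm_le_norm by blast
  have "\<bar>N x - N y\<bar> \<le> C * dist x y" for x y
    using is_norm_diff[of x y] is_norm_diff[of y x] is_norm_minus[of "x - y"] C(2)[of "x - y"]
    by (simp add: dist_norm abs_le_iff)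
  then have "C-lipschitz_on UNIV N"
    by (intro lipschitz_onI) (auto simp: dist_real_def less_imp_le C(1))
  then show ?thesis by (rule lipschitz_on_continuous_on)
qed

lemma borel_measurable_is_norm [measurable]: "N \<in> borel_measurable borel"
  using is_norm_continuous by (rule borel_measurable_continuous_onI)

lemma norm_le_is_norm: "\<exists>c>0. \<forall>x. c * norm x \<le> N x"
proof -
  obtain b :: 'a where "b \<in> Basis" using nonempty_Basis by blast
  then have "sphere (0::'a) 1 \<noteq> {}" by (auto intro!: exI[of _ b])
  then obtain z where z: "z \<in> sphere (0::'a) 1" "\<And>y. y \<in> sphere 0 1 \<Longrightarrow> N z \<le> N y"
    using continuous_attains_inf[OF compact_sphere _ continuous_on_subset[OF is_norm_continuous]]
    by blast
  have "N z * norm x \<le> N x" for x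
  proof (cases "x = 0")
    case False
    have "N z \<le> N ((1 / norm x) *\<^sub>R x)" using False by (intro z(2)) simp
    then show ?thesis using False by (simp add: is_norm_scaleR field_simps)
  qed simp
  moreover have "N z > 0" using z(1) by (intro is_norm_pos) auto
  ultimately show ?thesis by blast
qed

lemma SUP_ratio_norm_bdd: "bdd_above ((\<lambda>y. N y / norm y) ` (- {0}))"
proof -
  obtain C where "C > 0" "\<And>x. N x \<le> C * norm x" using is_norm_le_norm by blast
  then show ?thesis by (intro bdd_aboveI2[of _ _ C]) (auto simp: field_simps)
qed

lemma SUP_ratio_is_norm_bdd: "bdd_above ((\<lambda>y. norm y / N y) ` (- {0}))"
proof -
  obtain c where "c > 0" "\<And>x. c * norm x \<le> N x" using norm_le_is_norm by blast
  then show ?thesis by (intro bdd_aboveI2[of _ _ "1 / c"]) (auto simp: field_simps is_norm_pos)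
qed

lemma is_norm_le_SUP_ratio: "N x \<le> (SUP y\<in>- {0}. N y / norm y) * norm x"
proof (cases "x = 0")
  case False
  then have "N x / norm x \<le> (SUP y\<in>- {0}. N y / norm y)"
    by (intro cSUP_upper SUP_ratio_norm_bdd) auto
  then show ?thesis using False by (simp add: field_simps)
qed simp

lemma norm_le_SUP_ratio: "norm x \<le> (SUP y\<in>- {0}. norm y / N y) * N x"
proof (cases "x = 0")
  case False
  then have "norm x / N x \<le> (SUP y\<in>- {0}. norm y / N y)"
    by (intro cSUP_upper SUP_ratio_is_norm_bdd) auto
  then show ?thesis using False is_norm_pos[of x] by (simp add: field_simps)
qed simp

lemma SUP_ratio_nonneg:
  "0 \<le> (SUP y\<in>- {0}. N y / norm y)" "0 \<le> (SUP y\<in>- {0}. norm y / N y)"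
proof -
  obtain b :: 'a where "b \<in> Basis" using nonempty_Basis by blast
  then have b: "b \<in> - {0}" by auto
  show "0 \<le> (SUP y\<in>- {0}. N y / norm y)"
    by (rule order_trans[OF _ cSUP_upper[OF b SUP_ratio_norm_bdd]]) (simp add: is_norm_nonneg)
  show "0 \<le> (SUP y\<in>- {0}. norm y / N y)"
    by (rule order_trans[OF _ cSUP_upper[OF b SUP_ratio_is_norm_bdd]]) (simp add: is_norm_nonneg)
qed

lemma dual_norm_bdd_above: "bdd_above {g \<bullet> u | u. N u \<le> 1}"
proof -
  obtain c where c: "c > 0" "\<And>x. c * norm x \<le> N x" using norm_le_is_norm by blast
  have "g \<bullet> u \<le> norm g / c" if "N u \<le> 1" for u
  proof -
    have "norm u \<le> 1 / c" using c(2)[of u] that c(1) by (simp add: field_simps)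
    then have "norm g * norm u \<le> norm g * (1 / c)" by (intro mult_left_mono) auto
    then show ?thesis using norm_cauchy_schwarz[of g u] by simp
  qed
  then show ?thesis unfolding bdd_above_def by blast
qed

lemma inner_le_dual_norm: "N u \<le> 1 \<Longrightarrow> g \<bullet> u \<le> dual_norm N g"
  unfolding dual_norm_def by (rule cSup_upper[OF _ dual_norm_bdd_above]) blast

lemma dual_norm_le: "(\<And>u. N u \<le> 1 \<Longrightarrow> g \<bullet> u \<le> B) \<Longrightarrow> dual_norm N g \<le> B"
  unfolding dual_norm_def by (rule cSup_least) (auto intro!: exI[of _ 0])

lemma inner_le_dual_norm_mult: "g \<bullet> u \<le> dual_norm N g * N u"
proof (cases "u = 0")
  case False
  then have p: "N u > 0" by (rule is_norm_pos)
  have "g \<bullet> ((1 / N u) *\<^sub>R u) \<le> dual_norm N g"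
    using p by (intro inner_le_dual_norm) (simp add: is_norm_scaleR)
  then show ?thesis using p by (simp add: field_simps)
qed (use inner_le_dual_norm[of 0 g] in simp)

lemma is_norm_dual_norm: "is_norm (dual_norm N)"
proof -
  have zero: "dual_norm N 0 = 0"
    by (intro antisym dual_norm_le) (use inner_le_dual_norm[of 0 0] in auto)
  have nonzero: "dual_norm N g \<noteq> 0" if "g \<noteq> 0" for g
  proof -
    have "0 < (norm g)\<^sup>2 / N g" using that is_norm_pos[OF that] by simp
    also have "\<dots> = g \<bullet> ((1 / N g) *\<^sub>R g)" by (simp add: power2_norm_eq_inner)
    also have "\<dots> \<le> dual_norm N g"
      using is_norm_pos[OF that] by (intro inner_le_dual_norm) (simp add: is_norm_scaleR)
    finally show ?thesis by simp
  qed
  have triangle: "dual_norm N (g + h) \<le> dual_norm N g + dual_norm N h" for g h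
    by (intro dual_norm_le) (auto simp: inner_add_left intro: add_mono inner_le_dual_norm)
  have scale_pos: "dual_norm N (c *\<^sub>R g) \<le> c * dual_norm N g" if "c \<ge> 0" for c g
    by (intro dual_norm_le) (use that in \<open>auto intro: mult_left_mono inner_le_dual_norm\<close>)
  have minus: "dual_norm N (- g) \<le> dual_norm N g" for g
    by (intro dual_norm_le) (metis inner_le_dual_norm inner_minus_left inner_minus_right is_norm_minus)
  have scale: "dual_norm N (c *\<^sub>R g) = \<bar>c\<bar> * dual_norm N g" for c g
  proof -
    have le: "dual_norm N (c *\<^sub>R g) \<le> \<bar>c\<bar> * dual_norm N g" for c g
      using scale_pos[of "\<bar>c\<bar>" g] minus[of "\<bar>c\<bar> *\<^sub>R g"] by (cases "c \<ge> 0") auto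
    show ?thesis
    proof (cases "c = 0")
      case False
      have "dual_norm N g = dual_norm N (inverse c *\<^sub>R (c *\<^sub>R g))" using False by simp
      also have "\<dots> \<le> \<bar>inverse c\<bar> * dual_norm N (c *\<^sub>R g)" by (rule le)
      finally have "\<bar>c\<bar> * dual_norm N g \<le> dual_norm N (c *\<^sub>R g)"
        using False by (simp add: field_simps abs_inverse)
      with le show ?thesis by (rule antisym)
    qed (simp add: zero)
  qed
  show ?thesis unfolding is_norm_def using zero nonzero triangle scale by blast
qed

end

section \<open>Normalized steepest descent with momentum\<close>

lemma smooth_const_bound:
  assumes N: "is_norm N" and L: "\<exists>L. \<forall>x y. dual_norm N (g x - g y) \<le> L * N (x - y)"
  shows "0 \<le> smooth_const N g" "dual_norm N (g x - g y) \<le> smooth_const N g * N (x - y)"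
proof -
  define Ls where "Ls = {L. \<forall>x y. dual_norm N (g x - g y) \<le> L * N (x - y)}"
  have ne: "Ls \<noteq> {}" using L unfolding Ls_def by blast
  have nonneg: "0 \<le> L" if "L \<in> Ls" for L
  proof -
    obtain b :: 'a where "b \<in> Basis" using nonempty_Basis by blast
    then have "N b > 0" by (intro is_norm_pos[OF N]) auto
    moreover have "0 \<le> L * N (b - 0)"
      using that is_norm_nonneg[OF is_norm_dual_norm[OF N]] unfolding Ls_def by (blast intro: order_trans)
    ultimately show ?thesis by (simp add: zero_le_mult_iff)
  qed
  have sc: "smooth_const N g = Inf Ls" unfolding smooth_const_def Ls_def ..
  show "0 \<le> smooth_const N g" unfolding sc by (rule cInf_greatest[OF ne nonneg])
  show "dual_norm N (g x - g y) \<le> smooth_const N g * N (x - y)"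
  proof (cases "x = y")
    case False
    then have pos: "N (x - y) > 0" by (intro is_norm_pos[OF N]) simp
    have "dual_norm N (g x - g y) / N (x - y) \<le> Inf Ls"
      by (rule cInf_greatest[OF ne]) (use pos in \<open>auto simp: Ls_def field_simps\<close>)
    then show ?thesis unfolding sc using pos by (simp add: field_simps)
  qed (simp add: is_norm_zero[OF is_norm_dual_norm[OF N]] is_norm_zero[OF N])
qed

lemma descent_inequality:
  fixes f :: "'a::euclidean_space \<Rightarrow> real"
  assumes N: "is_norm N" and L: "0 \<le> L"
    and f_grad: "\<forall>x. (f has_derivative (\<lambda>h. g x \<bullet> h)) (at x)"
    and smooth: "\<forall>x y. dual_norm N (g x - g y) \<le> L * N (x - y)"
  shows "f (x + v) \<le> f x + g x \<bullet> v + L * (N v)\<^sup>2"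
proof -
  define h where "h s = f (x + s *\<^sub>R v)" for s :: real
  have "(h has_derivative (\<lambda>r. r * (g (x + s *\<^sub>R v) \<bullet> v))) (at s within {0..1})" for s
  proof -
    have "((\<lambda>s. x + s *\<^sub>R v) has_derivative (\<lambda>r. r *\<^sub>R v)) (at s)"
      by (auto intro!: derivative_eq_intros)
    from has_derivative_compose[OF this f_grad[rule_format]]
    show ?thesis unfolding h_def o_def by (simp add: has_derivative_at_withinI)
  qed
  then obtain s where s: "s \<in> {0..1}" "h 1 - h 0 = g (x + s *\<^sub>R v) \<bullet> v"
    using mvt_very_simple[of 0 1 h "\<lambda>s r. r * (g (x + s *\<^sub>R v) \<bullet> v)"] by auto
  have "(g (x + s *\<^sub>R v) - g x) \<bullet> v \<le> dual_norm N (g (x + s *\<^sub>R v) - g x) * N v"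
    by (rule inner_le_dual_norm_mult[OF N])
  also have "\<dots> \<le> L * N (s *\<^sub>R v) * N v"
    using smooth[rule_format, of "x + s *\<^sub>R v" x] is_norm_nonneg[OF N] by (intro mult_right_mono) auto
  also have "\<dots> = L * s * (N v)\<^sup>2"
    using s(1) by (simp add: is_norm_scaleR[OF N] power2_eq_square)
  also have "\<dots> \<le> L * (N v)\<^sup>2"
    using s(1) L by (intro mult_right_mono) (auto simp: mult_left_le)
  finally show ?thesis using s(2) unfolding h_def by (simp add: inner_diff_left)
qed

primrec ema :: "real \<Rightarrow> (nat \<Rightarrow> 'a::real_vector) \<Rightarrow> nat \<Rightarrow> 'a" where
  "ema \<alpha> \<xi> 0 = \<xi> 0"
| "ema \<alpha> \<xi> (Suc t) = (1 - \<alpha>) *\<^sub>R ema \<alpha> \<xi> t + \<alpha> *\<^sub>R \<xi> (Suc t)"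

lemma ema_split_initial: "ema \<alpha> \<xi> t = ema \<alpha> (\<xi>(0 := 0)) t + (1 - \<alpha>) ^ t *\<^sub>R \<xi> 0"
  by (induction t) (auto simp: algebra_simps)

lemma ema_cong: "(\<And>s. s \<le> t \<Longrightarrow> \<xi> s = \<zeta> s) \<Longrightarrow> ema \<alpha> \<xi> t = ema \<alpha> \<zeta> t"
  by (induction t) auto

lemma nsdm_cong:
  "(\<And>s. s \<le> t \<Longrightarrow> Gs s = Gs' s) \<Longrightarrow> nsdm sel \<alpha> \<eta> x0 Gs t = nsdm sel \<alpha> \<eta> x0 Gs' t"
  by (induction t) (auto simp: Let_def)

lemma nsdm_Suc_fst:
  "fst (nsdm sel \<alpha> \<eta> x0 Gs (Suc t))
     = fst (nsdm sel \<alpha> \<eta> x0 Gs t) - \<eta> *\<^sub>R sel t (snd (nsdm sel \<alpha> \<eta> x0 Gs t))"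
  by (simp add: case_prod_beta Let_def)

lemma nsdm_Suc_snd:
  "snd (nsdm sel \<alpha> \<eta> x0 Gs (Suc t))
     = (1 - \<alpha>) *\<^sub>R snd (nsdm sel \<alpha> \<eta> x0 Gs t) + \<alpha> *\<^sub>R Gs (Suc t) (fst (nsdm sel \<alpha> \<eta> x0 Gs (Suc t)))"
  by (simp add: case_prod_beta Let_def)

declare nsdm.simps(2) [simp del]

lemma nsdm_fst_cong:
  "(\<And>s. s < t \<Longrightarrow> Gs s = Gs' s) \<Longrightarrow> fst (nsdm sel \<alpha> \<eta> x0 Gs t) = fst (nsdm sel \<alpha> \<eta> x0 Gs' t)"
proof (cases t)
  case (Suc t')
  assume "\<And>s. s < t \<Longrightarrow> Gs s = Gs' s"
  then have "nsdm sel \<alpha> \<eta> x0 Gs t' = nsdm sel \<alpha> \<eta> x0 Gs' t'" using Suc by (intro nsdm_cong) auto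
  then show ?thesis unfolding Suc nsdm_Suc_fst by simp
qed simp

locale nsdm_smooth =
  fixes N :: "'a::euclidean_space \<Rightarrow> real" and f :: "'a \<Rightarrow> real" and g :: "'a \<Rightarrow> 'a"
    and L :: real and sel :: "nat \<Rightarrow> 'a \<Rightarrow> 'a" and \<alpha> \<eta> :: real
    and x0 :: 'a and Gs :: "nat \<Rightarrow> 'a \<Rightarrow> 'a"
  assumes norm: "is_norm N" and L_nonneg: "0 \<le> L"
    and alpha: "0 < \<alpha>" "\<alpha> < 1" and eta: "0 < \<eta>"
    and f_grad: "\<forall>x. (f has_derivative (\<lambda>h. g x \<bullet> h)) (at x)"
    and smooth: "\<forall>x y. dual_norm N (g x - g y) \<le> L * N (x - y)"
    and sel_max: "\<forall>t m. N (sel t m) \<le> 1 \<and> (\<forall>u. N u \<le> 1 \<longrightarrow> m \<bullet> u \<le> m \<bullet> sel t m)"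
begin

abbreviation iter :: "nat \<Rightarrow> 'a" where "iter t \<equiv> fst (nsdm sel \<alpha> \<eta> x0 Gs t)"
abbreviation mom :: "nat \<Rightarrow> 'a" where "mom t \<equiv> snd (nsdm sel \<alpha> \<eta> x0 Gs t)"
abbreviation grad_noise :: "nat \<Rightarrow> 'a" where "grad_noise t \<equiv> Gs t (iter t) - g (iter t)"

lemma dual_norm_triangle: "dual_norm N (a + b) \<le> dual_norm N a + dual_norm N b"
  by (rule is_norm_triangle[OF is_norm_dual_norm[OF norm]])

lemma dual_norm_scaleR: "dual_norm N (c *\<^sub>R a) = \<bar>c\<bar> * dual_norm N a"
  by (rule is_norm_scaleR[OF is_norm_dual_norm[OF norm]])

lemma iter_step_le: "N (iter t - iter (Suc t)) \<le> \<eta>"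
  using sel_max eta by (simp add: nsdm_Suc_fst is_norm_scaleR[OF norm] mult_left_le)

lemma momentum_drift_le:
  "dual_norm N (mom t - g (iter t) - ema \<alpha> grad_noise t) \<le> (1 - \<alpha>) * L * \<eta> / \<alpha>"
proof (induction t)
  case 0
  show ?case using alpha L_nonneg eta is_norm_zero[OF is_norm_dual_norm[OF norm]] by simp
next
  case (Suc t)
  define D where "D t = mom t - g (iter t) - ema \<alpha> grad_noise t" for t
  have "D (Suc t) = (1 - \<alpha>) *\<^sub>R D t + (1 - \<alpha>) *\<^sub>R (g (iter t) - g (iter (Suc t)))"
    unfolding D_def by (simp add: nsdm_Suc_snd algebra_simps)
  then have "dual_norm N (D (Suc t))
      \<le> (1 - \<alpha>) * dual_norm N (D t) + (1 - \<alpha>) * dual_norm N (g (iter t) - g (iter (Suc t)))"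
    using dual_norm_triangle[of "(1 - \<alpha>) *\<^sub>R D t" "(1 - \<alpha>) *\<^sub>R (g (iter t) - g (iter (Suc t)))"] alpha
    by (simp add: dual_norm_scaleR)
  also have "\<dots> \<le> (1 - \<alpha>) * ((1 - \<alpha>) * L * \<eta> / \<alpha>) + (1 - \<alpha>) * (L * \<eta>)"
  proof (intro add_mono mult_left_mono)
    show "dual_norm N (g (iter t) - g (iter (Suc t))) \<le> L * \<eta>"
      using smooth iter_step_le[of t] L_nonneg by (meson mult_left_mono order_trans)
  qed (use Suc alpha in \<open>auto simp: D_def\<close>)
  also have "\<dots> = (1 - \<alpha>) * L * \<eta> / \<alpha>" using alpha by (simp add: field_simps)
  finally show ?case unfolding D_def .
qed

lemma dual_norm_grad_le_descent:
  "dual_norm N (g (iter t))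
     \<le> (f (iter t) - f (iter (Suc t))) / \<eta> + L * \<eta> + 2 * dual_norm N (mom t - g (iter t))"
proof -
  define u where "u = sel t (mom t)"
  have u: "N u \<le> 1" using sel_max unfolding u_def by blast
  have "f (iter (Suc t)) \<le> f (iter t) + g (iter t) \<bullet> (- \<eta> *\<^sub>R u) + L * (N (- \<eta> *\<^sub>R u))\<^sup>2"
    using descent_inequality[OF norm L_nonneg f_grad smooth, of "iter t" "- \<eta> *\<^sub>R u"]
    by (simp add: nsdm_Suc_fst u_def)
  also have "L * (N (- \<eta> *\<^sub>R u))\<^sup>2 \<le> L * \<eta>\<^sup>2"
    using u eta L_nonneg is_norm_nonneg[OF norm, of u]
    by (auto simp: is_norm_minus[OF norm] is_norm_scaleR[OF norm] power_mult_distrib power_le_one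
        intro!: mult_left_mono)
  finally have descent: "\<eta> * (g (iter t) \<bullet> u) \<le> f (iter t) - f (iter (Suc t)) + L * \<eta>\<^sup>2"
    by simp
  text \<open>The momentum direction u is optimal for mom t, hence nearly optimal for the gradient.\<close>
  have "dual_norm N (mom t) \<le> mom t \<bullet> u"
    by (rule dual_norm_le[OF norm]) (use sel_max u_def in auto)
  moreover have "(mom t - g (iter t)) \<bullet> u \<le> dual_norm N (mom t - g (iter t))"
    by (rule inner_le_dual_norm[OF norm u])
  moreover have "dual_norm N (g (iter t)) \<le> dual_norm N (mom t) + dual_norm N (mom t - g (iter t))"
    using dual_norm_triangle[of "mom t" "g (iter t) - mom t"]
      is_norm_minus[OF is_norm_dual_norm[OF norm], of "mom t - g (iter t)"] by simp
  ultimately have "dual_norm N (g (iter t)) \<le> g (iter t) \<bullet> u + 2 * dual_norm N (mom t - g (iter t))"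
    by (simp add: inner_diff_left)
  then have "\<eta> * dual_norm N (g (iter t)) \<le> \<eta> * (g (iter t) \<bullet> u) + \<eta> * (2 * dual_norm N (mom t - g (iter t)))"
    using eta by (simp add: distrib_left[symmetric])
  with descent eta show ?thesis by (simp add: field_simps power2_eq_square)
qed

lemma sum_dual_norm_grad_le:
  assumes B: "\<And>x. B \<le> f x"
  shows "(\<Sum>t<T. dual_norm N (g (iter t)))
     \<le> (f x0 - B) / \<eta> + real T * (2 * L * \<eta> / \<alpha>) + 2 * (\<Sum>t<T. dual_norm N (ema \<alpha> grad_noise t))"
proof -
  have drift: "L * \<eta> + 2 * ((1 - \<alpha>) * L * \<eta> / \<alpha>) \<le> 2 * L * \<eta> / \<alpha>"
    using alpha L_nonneg eta by (simp add: field_simps)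
  have "dual_norm N (g (iter t))
      \<le> (f (iter t) - f (iter (Suc t))) / \<eta> + 2 * L * \<eta> / \<alpha> + 2 * dual_norm N (ema \<alpha> grad_noise t)" for t
    using dual_norm_triangle[of "mom t - g (iter t) - ema \<alpha> grad_noise t" "ema \<alpha> grad_noise t"]
      momentum_drift_le[of t] dual_norm_grad_le_descent[of t] drift by simp
  then have "(\<Sum>t<T. dual_norm N (g (iter t)))
      \<le> (\<Sum>t<T. (f (iter t) - f (iter (Suc t))) / \<eta> + 2 * L * \<eta> / \<alpha> + 2 * dual_norm N (ema \<alpha> grad_noise t))"
    by (rule sum_mono)
  also have "\<dots> = (f x0 - f (iter T)) / \<eta> + real T * (2 * L * \<eta> / \<alpha>)
      + 2 * (\<Sum>t<T. dual_norm N (ema \<alpha> grad_noise t))"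
    by (simp add: sum.distrib sum_distrib_left sum_lessThan_telescope'[of "\<lambda>t. f (iter t)"]
        flip: sum_divide_distrib)
  also have "\<dots> \<le> (f x0 - B) / \<eta> + real T * (2 * L * \<eta> / \<alpha>)
      + 2 * (\<Sum>t<T. dual_norm N (ema \<alpha> grad_noise t))"
    using B[of "iter T"] eta by (simp add: divide_right_mono)
  finally show ?thesis .
qed

lemma average_dual_norm_grad_le:
  assumes B: "\<And>x. B \<le> f x" and T: "0 < T"
  shows "(1 / real T) * (\<Sum>t<T. dual_norm N (g (iter t)))
     \<le> (f x0 - B) / (\<eta> * real T) + 2 * \<eta> / \<alpha> * L
       + 2 / real T * (\<Sum>t<T. dual_norm N (ema \<alpha> grad_noise t))"
proof -
  have "(1 / real T) * (\<Sum>t<T. dual_norm N (g (iter t)))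
      \<le> (1 / real T) * ((f x0 - B) / \<eta> + real T * (2 * L * \<eta> / \<alpha>)
        + 2 * (\<Sum>t<T. dual_norm N (ema \<alpha> grad_noise t)))"
    using sum_dual_norm_grad_le[OF B, of T] by (intro mult_left_mono) auto
  also have "\<dots> = (f x0 - B) / (\<eta> * real T) + 2 * \<eta> / \<alpha> * L
      + 2 / real T * (\<Sum>t<T. dual_norm N (ema \<alpha> grad_noise t))"
    using T eta by (simp add: field_simps)
  finally show ?thesis .
qed

end

section \<open>Measurable recovery of gradients\<close>

text \<open>A random function is a random variable in the product space
  \<open>Pi\<^sub>M UNIV (\<lambda>_. borel)\<close>, whose \<sigma>-algebra only sees countably many point evaluations
  at a time, so evaluating it at a random point is not obviously measurable. Reading a
  continuous function off the countable dyadic grid, and its gradient off difference quotients,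
  gives an operator that is measurable in both arguments.\<close>

definition dyadic_index :: "nat \<Rightarrow> 'a::euclidean_space \<Rightarrow> 'a \<Rightarrow> int" where
  "dyadic_index m y = restrict (\<lambda>b. \<lfloor>2 ^ m * (y \<bullet> b)\<rfloor>) Basis"

definition dyadic_point :: "nat \<Rightarrow> ('a::euclidean_space \<Rightarrow> int) \<Rightarrow> 'a" where
  "dyadic_point m k = (\<Sum>b\<in>Basis. (of_int (k b) / 2 ^ m) *\<^sub>R b)"

definition dyadic_value :: "('a::euclidean_space \<Rightarrow> real) \<Rightarrow> 'a \<Rightarrow> real" where
  "dyadic_value \<phi> y = lim (\<lambda>m. \<phi> (dyadic_point m (dyadic_index m y)))"

definition dyadic_grad :: "('a::euclidean_space \<Rightarrow> real) \<Rightarrow> 'a \<Rightarrow> 'a" where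
  "dyadic_grad \<phi> x = (\<Sum>b\<in>Basis.
     lim (\<lambda>n. real (Suc n) * (dyadic_value \<phi> (x + inverse (real (Suc n)) *\<^sub>R b) - dyadic_value \<phi> x)) *\<^sub>R b)"

lemma countable_dyadic_indices: "countable (Basis \<rightarrow>\<^sub>E (UNIV :: int set))"
  by (rule countable_PiE) auto

lemma dyadic_index_measurable:
  "dyadic_index m \<in> measurable borel (count_space (Basis \<rightarrow>\<^sub>E (UNIV :: int set)))"
proof -
  have "dyadic_index m -` {k} \<inter> space borel \<in> sets borel" if k: "k \<in> Basis \<rightarrow>\<^sub>E UNIV" for k
  proof -
    have "dyadic_index m -` {k} \<inter> space borel = {y \<in> space borel. \<forall>b\<in>Basis. \<lfloor>2 ^ m * (y \<bullet> b)\<rfloor> = k b}"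
      using k by (auto simp: dyadic_index_def fun_eq_iff PiE_def extensional_def)
    also have "\<dots> \<in> sets borel" by measurable
    finally show ?thesis .
  qed
  then show ?thesis
    by (subst measurable_count_space_eq_countable[OF countable_dyadic_indices]) (auto simp: dyadic_index_def)
qed

lemma dyadic_point_index_tendsto: "(\<lambda>m. dyadic_point m (dyadic_index m y)) \<longlonglongrightarrow> (y::'a::euclidean_space)"
proof -
  have coord: "\<bar>(dyadic_point m (dyadic_index m y) - y) \<bullet> b\<bar> \<le> 1 / 2 ^ m" if b: "b \<in> Basis" for m b
  proof -
    define z :: real where "z = 2 ^ m"
    define r :: real where "r = of_int \<lfloor>z * (y \<bullet> b)\<rfloor>"
    have z: "z > 0" unfolding z_def by simp
    have "(dyadic_point m (dyadic_index m y) - y) \<bullet> b = r / z - y \<bullet> b"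
      using b by (simp add: dyadic_point_def dyadic_index_def inner_diff_left inner_sum_left
          inner_Basis if_distrib r_def z_def cong: if_cong)
    also have "\<dots> = (r - z * (y \<bullet> b)) / z" using z by (simp add: field_simps)
    finally have eq: "\<bar>(dyadic_point m (dyadic_index m y) - y) \<bullet> b\<bar> = \<bar>r - z * (y \<bullet> b)\<bar> / z"
      using z by simp
    have "r \<le> z * (y \<bullet> b)" "z * (y \<bullet> b) < r + 1" unfolding r_def by linarith+
    then have "\<bar>r - z * (y \<bullet> b)\<bar> \<le> 1" by linarith
    then show ?thesis unfolding eq z_def[symmetric] using z by (simp add: divide_right_mono)
  qed
  have bound: "norm (dyadic_point m (dyadic_index m y) - y) \<le> real DIM('a) / 2 ^ m" for m
  proof -
    have "norm (dyadic_point m (dyadic_index m y) - y)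
        \<le> (\<Sum>b\<in>Basis. \<bar>(dyadic_point m (dyadic_index m y) - y) \<bullet> b\<bar>)"
      by (rule norm_le_l1)
    also have "\<dots> \<le> (\<Sum>b\<in>(Basis::'a set). 1 / 2 ^ m)" by (intro sum_mono coord)
    finally show ?thesis by simp
  qed
  have "(\<lambda>m. real DIM('a) / 2 ^ m) \<longlonglongrightarrow> 0"
    by (intro LIMSEQ_divide_realpow_zero) auto
  then have "(\<lambda>m. norm (dyadic_point m (dyadic_index m y) - y)) \<longlonglongrightarrow> 0"
    by (rule Lim_null_comparison[rotated]) (simp add: bound)
  then show ?thesis by (simp add: LIM_zero_iff tendsto_norm_zero_iff)
qed

lemma dyadic_value_eq: "continuous_on UNIV \<phi> \<Longrightarrow> dyadic_value \<phi> y = \<phi> y"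
  unfolding dyadic_value_def
  by (intro limI continuous_on_tendsto_compose[OF _ dyadic_point_index_tendsto]) auto

lemma measurable_dyadic_value:
  assumes A: "A \<in> measurable K (Pi\<^sub>M UNIV (\<lambda>_. borel))" and Y: "Y \<in> borel_measurable K"
  shows "(\<lambda>k. dyadic_value (A k) (Y k)) \<in> borel_measurable K"
  unfolding dyadic_value_def
proof (rule borel_measurable_lim_metric)
  fix m
  have "(\<lambda>k. (\<lambda>i k. A k (dyadic_point m i)) (dyadic_index m (Y k)) k) \<in> borel_measurable K"
  proof (rule measurable_compose_countable'[OF _ _ countable_dyadic_indices])
    show "(\<lambda>k. A k (dyadic_point m i)) \<in> borel_measurable K" for i
      using measurable_component_singleton[of "dyadic_point m i" UNIV "\<lambda>_. borel"] A by measurable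
    show "(\<lambda>k. dyadic_index m (Y k)) \<in> measurable K (count_space (Basis \<rightarrow>\<^sub>E UNIV))"
      by (rule measurable_compose[OF Y dyadic_index_measurable])
  qed
  then show "(\<lambda>k. A k (dyadic_point m (dyadic_index m (Y k)))) \<in> borel_measurable K" by simp
qed

lemma measurable_dyadic_grad:
  assumes A: "A \<in> measurable K (Pi\<^sub>M UNIV (\<lambda>_. borel))" and Y: "Y \<in> borel_measurable K"
  shows "(\<lambda>k. dyadic_grad (A k) (Y k)) \<in> borel_measurable K"
proof -
  have "(\<lambda>k. dyadic_value (A k) (Y k + c *\<^sub>R b)) \<in> borel_measurable K" for c b
    by (rule measurable_dyadic_value[OF A]) (use Y in measurable)
  then show ?thesis unfolding dyadic_grad_def
    by (intro borel_measurable_sum borel_measurable_scaleR borel_measurable_const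
        borel_measurable_lim_metric borel_measurable_times borel_measurable_diff
        measurable_dyadic_value[OF A Y])
qed

lemma dyadic_grad_eq:
  assumes d: "\<forall>x. (\<phi> has_derivative (\<lambda>h. G x \<bullet> h)) (at x)"
  shows "dyadic_grad \<phi> x = G x"
proof -
  have cont: "continuous_on UNIV \<phi>"
    using d has_derivative_continuous by (metis continuous_at_imp_continuous_on)
  have "(\<lambda>n. real (Suc n) * (dyadic_value \<phi> (x + inverse (real (Suc n)) *\<^sub>R b) - dyadic_value \<phi> x))
      \<longlonglongrightarrow> G x \<bullet> b" for b
  proof -
    define h where "h s = \<phi> (x + s *\<^sub>R b)" for s :: real
    have "((\<lambda>s. x + s *\<^sub>R b) has_derivative (\<lambda>r. r *\<^sub>R b)) (at 0)"
      by (auto intro!: derivative_eq_intros)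
    from has_derivative_compose[OF this d[rule_format]]
    have "(h has_derivative (\<lambda>r. r * (G x \<bullet> b))) (at 0)"
      unfolding h_def o_def by simp
    then have "(h has_field_derivative (G x \<bullet> b)) (at 0)"
      unfolding has_field_derivative_def by (rule has_derivative_eq_rhs) (simp add: fun_eq_iff)
    then have "((\<lambda>s. (h (0 + s) - h 0) / s) \<longlongrightarrow> G x \<bullet> b) (at 0)"
      by (simp add: DERIV_def)
    moreover have "filterlim (\<lambda>n. inverse (real (Suc n))) (at 0) sequentially"
      by (rule tendsto_imp_filterlim_at_right[THEN filterlim_mono, OF LIMSEQ_inverse_real_of_nat])
         (auto intro: at_within_le_at)
    ultimately have "(\<lambda>n. (h (0 + inverse (real (Suc n))) - h 0) / inverse (real (Suc n))) \<longlonglongrightarrow> G x \<bullet> b"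
      by (rule filterlim_compose)
    then show ?thesis
      unfolding h_def using dyadic_value_eq[OF cont] by (simp add: divide_inverse mult.commute)
  qed
  then have "lim (\<lambda>n. real (Suc n) * (dyadic_value \<phi> (x + inverse (real (Suc n)) *\<^sub>R b) - dyadic_value \<phi> x))
      = G x \<bullet> b" for b
    by (rule limI)
  then show ?thesis unfolding dyadic_grad_def by (simp add: euclidean_representation)
qed

lemma borel_measurable_gradient:
  fixes f :: "'a::euclidean_space \<Rightarrow> real"
  assumes "\<forall>x. (f has_derivative (\<lambda>h. g x \<bullet> h)) (at x)"
  shows "g \<in> borel_measurable borel"
proof -
  have "(\<lambda>x. dyadic_grad f x) \<in> borel_measurable borel"
    by (rule measurable_dyadic_grad[OF measurable_const]) (simp_all add: space_PiM)
  then show ?thesis by (simp add: dyadic_grad_eq[OF assms])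
qed

section \<open>Probabilistic estimates\<close>

context prob_space
begin

lemma indep_var_nn_integral_le:
  assumes ind: "indep_var S X Tm Y"
    and h: "h \<in> borel_measurable (S \<Otimes>\<^sub>M Tm)"
    and B: "\<And>x. x \<in> space S \<Longrightarrow> (\<integral>\<^sup>+\<omega>. h (x, Y \<omega>) \<partial>M) \<le> B"
  shows "(\<integral>\<^sup>+\<omega>. h (X \<omega>, Y \<omega>) \<partial>M) \<le> B"
proof -
  have rv: "random_variable S X" "random_variable Tm Y" and
    eq: "distr M S X \<Otimes>\<^sub>M distr M Tm Y = distr M (S \<Otimes>\<^sub>M Tm) (\<lambda>x. (X x, Y x))"
    using ind unfolding indep_var_distribution_eq by auto
  interpret X: prob_space "distr M S X" by (rule prob_space_distr) fact
  interpret Y: prob_space "distr M Tm Y" by (rule prob_space_distr) fact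
  interpret XY: pair_prob_space "distr M S X" "distr M Tm Y" ..
  have "(\<integral>\<^sup>+\<omega>. h (X \<omega>, Y \<omega>) \<partial>M) = integral\<^sup>N (distr M S X \<Otimes>\<^sub>M distr M Tm Y) h"
    unfolding eq using h rv by (subst nn_integral_distr) (auto intro: measurable_Pair)
  also have "\<dots> = (\<integral>\<^sup>+ x. \<integral>\<^sup>+ y. h (x, y) \<partial>distr M Tm Y \<partial>distr M S X)"
    using h by (subst Y.nn_integral_fst) auto
  also have "\<dots> \<le> (\<integral>\<^sup>+ x. B \<partial>distr M S X)"
  proof (rule nn_integral_mono)
    fix x assume "x \<in> space (distr M S X)"
    then have x: "x \<in> space S" by simp
    have "(\<lambda>y. h (x, y)) \<in> borel_measurable Tm" using h x by measurable
    then show "(\<integral>\<^sup>+ y. h (x, y) \<partial>distr M Tm Y) \<le> B"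
      using B[OF x] rv(2) by (subst nn_integral_distr) auto
  qed
  also have "\<dots> = B" using X.emeasure_space_1 by simp
  finally show ?thesis .
qed

lemma indep_var_integral_eq_0:
  fixes h :: "_ \<Rightarrow> real"
  assumes ind: "indep_var S X Tm Y"
    and h: "h \<in> borel_measurable (S \<Otimes>\<^sub>M Tm)"
    and int: "integrable M (\<lambda>\<omega>. h (X \<omega>, Y \<omega>))"
    and zero: "\<And>x. x \<in> space S \<Longrightarrow> (\<integral>\<omega>. h (x, Y \<omega>) \<partial>M) = 0"
  shows "(\<integral>\<omega>. h (X \<omega>, Y \<omega>) \<partial>M) = 0"
proof -
  have rv: "random_variable S X" "random_variable Tm Y" and
    eq: "distr M S X \<Otimes>\<^sub>M distr M Tm Y = distr M (S \<Otimes>\<^sub>M Tm) (\<lambda>x. (X x, Y x))"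
    using ind unfolding indep_var_distribution_eq by auto
  interpret X: prob_space "distr M S X" by (rule prob_space_distr) fact
  interpret Y: prob_space "distr M Tm Y" by (rule prob_space_distr) fact
  interpret XY: pair_prob_space "distr M S X" "distr M Tm Y" ..
  have pair: "(\<lambda>x. (X x, Y x)) \<in> measurable M (S \<Otimes>\<^sub>M Tm)" using rv by (rule measurable_Pair)
  have "(\<integral>\<omega>. h (X \<omega>, Y \<omega>) \<partial>M) = integral\<^sup>L (distr M S X \<Otimes>\<^sub>M distr M Tm Y) h"
    unfolding eq using h pair by (subst integral_distr) auto
  also have "\<dots> = (\<integral> x. \<integral> y. h (x, y) \<partial>distr M Tm Y \<partial>distr M S X)"
    by (rule XY.integral_fst'[symmetric])
       (use int h pair in \<open>simp add: eq integrable_distr_eq\<close>)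
  also have "\<dots> = (\<integral> x. 0 \<partial>distr M S X)"
  proof (intro Bochner_Integration.integral_cong refl)
    fix x assume "x \<in> space (distr M S X)"
    then have x: "x \<in> space S" by simp
    have "(\<lambda>y. h (x, y)) \<in> borel_measurable Tm" using h x by measurable
    then show "(\<integral> y. h (x, y) \<partial>distr M Tm Y) = 0"
      using zero[OF x] rv(2) by (subst integral_distr) auto
  qed
  finally show ?thesis by simp
qed

lemma integral_le_sqrt_second_moment:
  fixes u :: "'a \<Rightarrow> real"
  assumes u: "u \<in> borel_measurable M" and sq: "integrable M (\<lambda>\<omega>. (u \<omega>)\<^sup>2)"
  shows "integrable M u" "expectation u \<le> sqrt (expectation (\<lambda>\<omega>. (u \<omega>)\<^sup>2))"
proof -
  show int: "integrable M u" by (rule square_integrable_imp_integrable[OF u sq])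
  show "expectation u \<le> sqrt (expectation (\<lambda>\<omega>. (u \<omega>)\<^sup>2))"
    using variance_positive[of u] variance_eq[OF int sq] by (intro real_le_rsqrt) simp
qed

lemma nn_integral_le_sum_expectation:
  fixes X :: "'a \<Rightarrow> real" and Y :: "nat \<Rightarrow> 'a \<Rightarrow> real"
  assumes X: "\<And>\<omega>. \<omega> \<in> space M \<Longrightarrow> 0 \<le> X \<omega> \<and> X \<omega> \<le> K + c * (\<Sum>t<T. Y t \<omega>)"
    and Y: "\<And>t. t < T \<Longrightarrow> integrable M (Y t) \<and> expectation (Y t) \<le> b t"
    and c: "0 \<le> c"
  shows "(\<integral>\<^sup>+\<omega>. ennreal (X \<omega>) \<partial>M) \<le> ennreal (K + c * (\<Sum>t<T. b t))"
proof -
  have Y_int: "\<And>t. t < T \<Longrightarrow> integrable M (Y t)" using Y by blast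
  have int: "integrable M (\<lambda>\<omega>. K + c * (\<Sum>t<T. Y t \<omega>))"
    using Y_int by (intro Bochner_Integration.integrable_add Bochner_Integration.integrable_mult_right
        Bochner_Integration.integrable_sum integrable_const) auto
  have "(\<integral>\<^sup>+\<omega>. ennreal (X \<omega>) \<partial>M) \<le> (\<integral>\<^sup>+\<omega>. ennreal (K + c * (\<Sum>t<T. Y t \<omega>)) \<partial>M)"
    using X by (intro nn_integral_mono ennreal_leI) auto
  also have "\<dots> = ennreal (expectation (\<lambda>\<omega>. K + c * (\<Sum>t<T. Y t \<omega>)))"
    using int X by (intro nn_integral_eq_integral AE_I2) (auto intro: order_trans)
  also have "expectation (\<lambda>\<omega>. K + c * (\<Sum>t<T. Y t \<omega>)) = K + c * (\<Sum>t<T. expectation (Y t))"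
  proof -
    have "expectation (\<lambda>\<omega>. \<Sum>t<T. Y t \<omega>) = (\<Sum>t<T. expectation (Y t))"
      using Y_int by (intro Bochner_Integration.integral_sum) auto
    moreover have "integrable M (\<lambda>\<omega>. \<Sum>t<T. Y t \<omega>)"
      using Y_int by (intro Bochner_Integration.integrable_sum) auto
    ultimately show ?thesis by (simp add: prob_space)
  qed
  also have "\<dots> \<le> ennreal (K + c * (\<Sum>t<T. b t))"
    using Y c by (intro ennreal_leI add_left_mono mult_left_mono sum_mono) auto
  finally show ?thesis .
qed

end

lemma borel_measurable_ema:
  fixes \<xi> :: "'a \<Rightarrow> nat \<Rightarrow> 'b::euclidean_space"
  assumes "\<And>s. s \<le> t \<Longrightarrow> (\<lambda>\<omega>. \<xi> \<omega> s) \<in> borel_measurable K"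
  shows "(\<lambda>\<omega>. ema \<alpha> (\<xi> \<omega>) t) \<in> borel_measurable K"
  using assms by (induction t) auto

context prob_space
begin

lemma integral_is_norm_ema_le:
  fixes \<xi> :: "'a \<Rightarrow> nat \<Rightarrow> 'b::euclidean_space"
  assumes N: "is_norm N" and \<alpha>: "0 \<le> \<alpha>" "\<alpha> \<le> 1"
    and meas: "\<And>s. s \<le> t \<Longrightarrow> (\<lambda>\<omega>. \<xi> \<omega> s) \<in> borel_measurable M"
    and bound: "\<And>s. s \<le> t \<Longrightarrow> integrable M (\<lambda>\<omega>. N (\<xi> \<omega> s)) \<and> expectation (\<lambda>\<omega>. N (\<xi> \<omega> s)) \<le> \<sigma>"
  shows "integrable M (\<lambda>\<omega>. N (ema \<alpha> (\<xi> \<omega>) t)) \<and> expectation (\<lambda>\<omega>. N (ema \<alpha> (\<xi> \<omega>) t)) \<le> \<sigma>"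
  using meas bound
proof (induction t)
  case (Suc t)
  define Z where "Z \<omega> = (1 - \<alpha>) * N (ema \<alpha> (\<xi> \<omega>) t) + \<alpha> * N (\<xi> \<omega> (Suc t))" for \<omega>
  have IH: "integrable M (\<lambda>\<omega>. N (ema \<alpha> (\<xi> \<omega>) t))" "expectation (\<lambda>\<omega>. N (ema \<alpha> (\<xi> \<omega>) t)) \<le> \<sigma>"
    using Suc by auto
  have \<xi>: "integrable M (\<lambda>\<omega>. N (\<xi> \<omega> (Suc t)))" "expectation (\<lambda>\<omega>. N (\<xi> \<omega> (Suc t))) \<le> \<sigma>"
    using Suc.prems(2) by auto
  have le: "N (ema \<alpha> (\<xi> \<omega>) (Suc t)) \<le> Z \<omega>" for \<omega>
    using is_norm_triangle[OF N, of "(1 - \<alpha>) *\<^sub>R ema \<alpha> (\<xi> \<omega>) t" "\<alpha> *\<^sub>R \<xi> \<omega> (Suc t)"] \<alpha>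
    by (simp add: Z_def is_norm_scaleR[OF N])
  have Z: "integrable M Z" using IH(1) \<xi>(1) by (simp add: Z_def[abs_def])
  have meas_ema: "(\<lambda>\<omega>. N (ema \<alpha> (\<xi> \<omega>) (Suc t))) \<in> borel_measurable M"
    using borel_measurable_ema[OF Suc.prems(1)] borel_measurable_is_norm[OF N] by measurable
  have int: "integrable M (\<lambda>\<omega>. N (ema \<alpha> (\<xi> \<omega>) (Suc t)))"
    by (rule Bochner_Integration.integrable_bound[OF Z meas_ema])
       (use le is_norm_nonneg[OF N] in \<open>auto intro!: AE_I2 order_trans[OF _ abs_ge_self]\<close>)
  have "expectation (\<lambda>\<omega>. N (ema \<alpha> (\<xi> \<omega>) (Suc t))) \<le> expectation Z"
    by (rule integral_mono[OF int Z le])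
  also have "\<dots> = (1 - \<alpha>) * expectation (\<lambda>\<omega>. N (ema \<alpha> (\<xi> \<omega>) t)) + \<alpha> * expectation (\<lambda>\<omega>. N (\<xi> \<omega> (Suc t)))"
    using IH(1) \<xi>(1) by (simp add: Z_def[abs_def])
  also have "\<dots> \<le> (1 - \<alpha>) * \<sigma> + \<alpha> * \<sigma>"
    using IH(2) \<xi>(2) \<alpha> by (intro add_mono mult_left_mono) auto
  finally show ?case using int by (simp add: algebra_simps)
qed simp

text \<open>Hypothesis orth says that the \<xi> are martingale differences, so only the diagonal terms
  survive, and the weights satisfy \<open>(1 - \<alpha>)\<^sup>2 \<alpha> + \<alpha>\<^sup>2 \<le> \<alpha>\<close>.\<close>

lemma ema_second_moment_le:
  fixes \<xi> :: "'a \<Rightarrow> nat \<Rightarrow> 'b::euclidean_space"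
  assumes \<alpha>: "0 \<le> \<alpha>" "\<alpha> \<le> 1"
    and meas: "\<And>s. s \<le> t \<Longrightarrow> (\<lambda>\<omega>. \<xi> \<omega> s) \<in> borel_measurable M"
    and sq: "\<And>s. s \<le> t \<Longrightarrow>
      integrable M (\<lambda>\<omega>. (norm (\<xi> \<omega> s))\<^sup>2) \<and> expectation (\<lambda>\<omega>. (norm (\<xi> \<omega> s))\<^sup>2) \<le> B"
    and start: "\<And>\<omega>. \<xi> \<omega> 0 = 0"
    and orth: "\<And>s. Suc s \<le> t \<Longrightarrow> integrable M (\<lambda>\<omega>. ema \<alpha> (\<xi> \<omega>) s \<bullet> \<xi> \<omega> (Suc s))
      \<Longrightarrow> expectation (\<lambda>\<omega>. ema \<alpha> (\<xi> \<omega>) s \<bullet> \<xi> \<omega> (Suc s)) = 0"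
  shows "integrable M (\<lambda>\<omega>. (norm (ema \<alpha> (\<xi> \<omega>) t))\<^sup>2)
    \<and> expectation (\<lambda>\<omega>. (norm (ema \<alpha> (\<xi> \<omega>) t))\<^sup>2) \<le> \<alpha> * B"
  using meas sq orth
proof (induction t)
  case 0
  have "0 \<le> expectation (\<lambda>\<omega>. (norm (\<xi> \<omega> 0))\<^sup>2)" by (rule integral_nonneg_AE) simp
  then have "0 \<le> B" using 0(2)[of 0] by linarith
  then show ?case using \<alpha> start by simp
next
  case (Suc t)
  define S where "S \<omega> = ema \<alpha> (\<xi> \<omega>) t" for \<omega>
  define x where "x \<omega> = \<xi> \<omega> (Suc t)" for \<omega>
  have IH: "integrable M (\<lambda>\<omega>. (norm (S \<omega>))\<^sup>2)" "expectation (\<lambda>\<omega>. (norm (S \<omega>))\<^sup>2) \<le> \<alpha> * B"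
    using Suc unfolding S_def by auto
  have X: "integrable M (\<lambda>\<omega>. (norm (x \<omega>))\<^sup>2)" "expectation (\<lambda>\<omega>. (norm (x \<omega>))\<^sup>2) \<le> B"
    using Suc.prems(2) unfolding x_def by auto
  have S: "S \<in> borel_measurable M" unfolding S_def
    by (rule borel_measurable_ema) (use Suc.prems(1) in auto)
  have x: "x \<in> borel_measurable M" unfolding x_def using Suc.prems(1) by simp
  have cross: "integrable M (\<lambda>\<omega>. S \<omega> \<bullet> x \<omega>)"
  proof (rule Bochner_Integration.integrable_bound)
    show "integrable M (\<lambda>\<omega>. (norm (S \<omega>))\<^sup>2 + (norm (x \<omega>))\<^sup>2)" using IH(1) X(1) by simp
    show "(\<lambda>\<omega>. S \<omega> \<bullet> x \<omega>) \<in> borel_measurable M" using S x by measurable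
    have "\<bar>S \<omega> \<bullet> x \<omega>\<bar> \<le> (norm (S \<omega>))\<^sup>2 + (norm (x \<omega>))\<^sup>2" for \<omega>
      using Cauchy_Schwarz_ineq2[of "S \<omega>" "x \<omega>"] sum_squares_bound[of "norm (S \<omega>)" "norm (x \<omega>)"]
        mult_nonneg_nonneg[OF norm_ge_zero norm_ge_zero, of "S \<omega>" "x \<omega>"] by linarith
    then show "AE \<omega> in M. norm (S \<omega> \<bullet> x \<omega>) \<le> norm ((norm (S \<omega>))\<^sup>2 + (norm (x \<omega>))\<^sup>2)"
      by (intro AE_I2) simp
  qed
  have expand: "(norm (ema \<alpha> (\<xi> \<omega>) (Suc t)))\<^sup>2
      = (1 - \<alpha>)\<^sup>2 * (norm (S \<omega>))\<^sup>2 + \<alpha>\<^sup>2 * (norm (x \<omega>))\<^sup>2 + 2 * (1 - \<alpha>) * \<alpha> * (S \<omega> \<bullet> x \<omega>)" for \<omega>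
    unfolding S_def x_def power2_norm_eq_inner
    by (simp add: inner_add_left inner_add_right inner_commute algebra_simps power2_eq_square)
  have "expectation (\<lambda>\<omega>. S \<omega> \<bullet> x \<omega>) = 0"
    using Suc.prems(3)[of t] cross unfolding S_def x_def by simp
  then have "expectation (\<lambda>\<omega>. (norm (ema \<alpha> (\<xi> \<omega>) (Suc t)))\<^sup>2)
      = (1 - \<alpha>)\<^sup>2 * expectation (\<lambda>\<omega>. (norm (S \<omega>))\<^sup>2) + \<alpha>\<^sup>2 * expectation (\<lambda>\<omega>. (norm (x \<omega>))\<^sup>2)"
    unfolding expand using IH(1) X(1) cross by simp
  also have "\<dots> \<le> ((1 - \<alpha>)\<^sup>2 * \<alpha> + \<alpha>\<^sup>2) * B"
    using IH(2) X(2) mult_left_mono[OF IH(2), of "(1 - \<alpha>)\<^sup>2"] mult_left_mono[OF X(2), of "\<alpha>\<^sup>2"]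
    by (simp add: algebra_simps)
  also have "\<dots> \<le> \<alpha> * B"
  proof (rule mult_right_mono)
    have "\<alpha> * \<alpha> * \<alpha> \<le> \<alpha> * \<alpha>" using \<alpha> by (intro mult_left_le) auto
    then show "(1 - \<alpha>)\<^sup>2 * \<alpha> + \<alpha>\<^sup>2 \<le> \<alpha>" by (simp add: power2_eq_square algebra_simps)
    have "0 \<le> expectation (\<lambda>\<omega>. (norm (x \<omega>))\<^sup>2)" by (rule integral_nonneg_AE) simp
    then show "0 \<le> B" using X(2) by linarith
  qed
  finally show ?case unfolding expand using IH(1) X(1) cross by simp
qed

end

section \<open>The stochastic iteration\<close>

locale stochastic_nsdm = prob_space M
  for M :: "'w measure" +
  fixes N :: "'a::euclidean_space \<Rightarrow> real" and g :: "'a \<Rightarrow> 'a"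
    and F :: "nat \<Rightarrow> 'w \<Rightarrow> 'a \<Rightarrow> real" and G :: "nat \<Rightarrow> 'w \<Rightarrow> 'a \<Rightarrow> 'a"
    and sel :: "nat \<Rightarrow> 'a \<Rightarrow> 'a" and \<alpha> \<eta> \<sigma> :: real and T :: nat and x0 :: 'a
  assumes norm: "is_norm N"
    and alpha: "0 < \<alpha>" "\<alpha> < 1"
    and g_meas [measurable]: "g \<in> borel_measurable borel"
    and F_grad: "\<forall>t<T. \<forall>\<omega>\<in>space M. \<forall>x. (F t \<omega> has_derivative (\<lambda>h. G t \<omega> x \<bullet> h)) (at x)"
    and F_indep: "indep_vars (\<lambda>_. Pi\<^sub>M UNIV (\<lambda>_. borel)) F {..<T}"
    and unbiased: "\<forall>t<T. \<forall>x. integrable M (\<lambda>\<omega>. G t \<omega> x) \<and> (\<integral>\<omega>. G t \<omega> x \<partial>M) = g x"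
    and sigma: "0 \<le> \<sigma>"
    and var: "\<forall>t<T. \<forall>x. (\<integral>\<^sup>+\<omega>. ennreal ((dual_norm N (G t \<omega> x - g x))\<^sup>2) \<partial>M) \<le> ennreal (\<sigma>\<^sup>2)"
    and sel_meas: "\<forall>t. sel t \<in> borel_measurable borel"
begin

abbreviation fun_borel :: "('a \<Rightarrow> real) measure" where
  "fun_borel \<equiv> Pi\<^sub>M UNIV (\<lambda>_. borel)"

abbreviation history_space :: "nat \<Rightarrow> (nat \<Rightarrow> 'a \<Rightarrow> real) measure" where
  "history_space k \<equiv> Pi\<^sub>M {..<k} (\<lambda>_. fun_borel)"

definition history :: "nat \<Rightarrow> 'w \<Rightarrow> nat \<Rightarrow> 'a \<Rightarrow> real" where
  "history k \<omega> = restrict (\<lambda>i. F i \<omega>) {..<k}"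

definition path :: "'w \<Rightarrow> nat \<Rightarrow> 'a" where
  "path \<omega> t = fst (nsdm sel \<alpha> \<eta> x0 (\<lambda>s. G s \<omega>) t)"

definition grad_noise :: "'w \<Rightarrow> nat \<Rightarrow> 'a" where
  "grad_noise \<omega> t = G t \<omega> (path \<omega> t) - g (path \<omega> t)"

text \<open>The same quantities recomputed, through dyadic_grad, from the first sampled
  functions alone: this makes them measurable functions of the history, which is independent
  of the next sample.\<close>

definition hist_iter :: "(nat \<Rightarrow> 'a \<Rightarrow> real) \<Rightarrow> nat \<Rightarrow> 'a" where
  "hist_iter p t = fst (nsdm sel \<alpha> \<eta> x0 (\<lambda>s. dyadic_grad (p s)) t)"

definition hist_mom :: "(nat \<Rightarrow> 'a \<Rightarrow> real) \<Rightarrow> nat \<Rightarrow> 'a" where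
  "hist_mom p t = snd (nsdm sel \<alpha> \<eta> x0 (\<lambda>s. dyadic_grad (p s)) t)"

definition hist_noise :: "(nat \<Rightarrow> 'a \<Rightarrow> real) \<Rightarrow> nat \<Rightarrow> 'a" where
  "hist_noise p t = dyadic_grad (p t) (hist_iter p t) - g (hist_iter p t)"

lemma sel_measurable [measurable]: "sel t \<in> borel_measurable borel"
  using sel_meas by blast

lemma dual_norm_measurable [measurable]: "dual_norm N \<in> borel_measurable borel"
  by (rule borel_measurable_is_norm[OF is_norm_dual_norm[OF norm]])

lemma F_measurable: "t < T \<Longrightarrow> F t \<in> measurable M fun_borel"
  using F_indep unfolding indep_vars_def by auto

lemma history_measurable: "k \<le> T \<Longrightarrow> history k \<in> measurable M (history_space k)"
  unfolding history_def by (intro measurable_restrict F_measurable) auto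

lemma component_measurable: "s < k \<Longrightarrow> (\<lambda>p. p s) \<in> measurable (history_space k) fun_borel"
  by (rule measurable_component_singleton) auto

lemma hist_iter_mom_measurable:
  "t < k \<Longrightarrow> (\<lambda>p. hist_iter p t) \<in> borel_measurable (history_space k)
    \<and> (\<lambda>p. hist_mom p t) \<in> borel_measurable (history_space k)"
proof (induction t)
  case 0
  have "(\<lambda>p. dyadic_grad (p 0) x0) \<in> borel_measurable (history_space k)"
    by (rule measurable_dyadic_grad[OF component_measurable[OF 0]]) simp
  then show ?case by (simp add: hist_iter_def hist_mom_def)
next
  case (Suc t)
  then have IH: "(\<lambda>p. hist_iter p t) \<in> borel_measurable (history_space k)"
    "(\<lambda>p. hist_mom p t) \<in> borel_measurable (history_space k)" by auto
  have iter_Suc: "hist_iter p (Suc t) = hist_iter p t - \<eta> *\<^sub>R sel t (hist_mom p t)" for p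
    unfolding hist_iter_def hist_mom_def by (rule nsdm_Suc_fst)
  have mom_Suc: "hist_mom p (Suc t)
      = (1 - \<alpha>) *\<^sub>R hist_mom p t + \<alpha> *\<^sub>R dyadic_grad (p (Suc t)) (hist_iter p (Suc t))" for p
    unfolding hist_iter_def hist_mom_def by (rule nsdm_Suc_snd)
  have iter: "(\<lambda>p. hist_iter p (Suc t)) \<in> borel_measurable (history_space k)"
    unfolding iter_Suc using IH by measurable
  have "(\<lambda>p. dyadic_grad (p (Suc t)) (hist_iter p (Suc t))) \<in> borel_measurable (history_space k)"
    by (rule measurable_dyadic_grad[OF component_measurable[OF Suc.prems] iter])
  then have "(\<lambda>p. hist_mom p (Suc t)) \<in> borel_measurable (history_space k)"
    unfolding mom_Suc using IH by measurable
  with iter show ?case by simp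
qed

lemma hist_iter_measurable: "t \<le> k \<Longrightarrow> (\<lambda>p. hist_iter p t) \<in> borel_measurable (history_space k)"
proof (cases t)
  case (Suc s)
  assume "t \<le> k"
  then have "(\<lambda>p. hist_iter p s) \<in> borel_measurable (history_space k)"
    "(\<lambda>p. hist_mom p s) \<in> borel_measurable (history_space k)"
    using hist_iter_mom_measurable[of s k] Suc by auto
  moreover have "hist_iter p t = hist_iter p s - \<eta> *\<^sub>R sel s (hist_mom p s)" for p
    unfolding Suc hist_iter_def hist_mom_def by (rule nsdm_Suc_fst)
  ultimately show ?thesis by simp
qed (simp add: hist_iter_def)

lemma hist_noise_measurable: "s < k \<Longrightarrow> (\<lambda>p. hist_noise p s) \<in> borel_measurable (history_space k)"
  unfolding hist_noise_def
  using measurable_dyadic_grad[OF component_measurable hist_iter_measurable] hist_iter_measurable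
  by measurable

lemma dyadic_grad_F: "t < T \<Longrightarrow> \<omega> \<in> space M \<Longrightarrow> dyadic_grad (F t \<omega>) = G t \<omega>"
  using F_grad dyadic_grad_eq by blast

lemma path_eq_hist_iter:
  "k \<le> T \<Longrightarrow> t \<le> k \<Longrightarrow> \<omega> \<in> space M \<Longrightarrow> path \<omega> t = hist_iter (history k \<omega>) t"
  unfolding path_def hist_iter_def by (rule nsdm_fst_cong) (simp add: history_def dyadic_grad_F)

lemma grad_noise_eq_hist_noise:
  "k \<le> T \<Longrightarrow> t < k \<Longrightarrow> \<omega> \<in> space M \<Longrightarrow> grad_noise \<omega> t = hist_noise (history k \<omega>) t"
  using path_eq_hist_iter[of k t \<omega>]
  by (simp add: grad_noise_def hist_noise_def history_def dyadic_grad_F)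

lemma grad_noise_measurable: "t < T \<Longrightarrow> (\<lambda>\<omega>. grad_noise \<omega> t) \<in> borel_measurable M"
  by (rule measurable_cong[THEN iffD2, OF grad_noise_eq_hist_noise[of T t]])
     (auto intro: measurable_compose[OF history_measurable hist_noise_measurable])

lemma indep_history_next:
  "k < T \<Longrightarrow> indep_var (history_space k) (history k) (Pi\<^sub>M {k} (\<lambda>_. fun_borel)) (\<lambda>\<omega>. restrict (\<lambda>i. F i \<omega>) {k})"
  using indep_var_restrict[OF F_indep, of "{..<k}" "{k}"] unfolding history_def by auto

end

context stochastic_nsdm
begin

lemma grad_noise_dual_norm_sq_nn_integral:
  assumes t: "t < T"
  shows "(\<integral>\<^sup>+\<omega>. ennreal ((dual_norm N (grad_noise \<omega> t))\<^sup>2) \<partial>M) \<le> ennreal (\<sigma>\<^sup>2)"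
proof -
  define Y where "Y \<omega> = restrict (\<lambda>i. F i \<omega>) {t}" for \<omega>
  define h where "h q = ennreal ((dual_norm N (dyadic_grad (snd q t) (hist_iter (fst q) t)
      - g (hist_iter (fst q) t)))\<^sup>2)" for q :: "(nat \<Rightarrow> 'a \<Rightarrow> real) \<times> (nat \<Rightarrow> 'a \<Rightarrow> real)"
  have snd_t: "(\<lambda>q. snd q t) \<in> measurable (history_space t \<Otimes>\<^sub>M Pi\<^sub>M {t} (\<lambda>_. fun_borel)) fun_borel"
    by (rule measurable_compose[OF measurable_snd measurable_component_singleton]) auto
  have iter: "(\<lambda>q. hist_iter (fst q) t) \<in> borel_measurable (history_space t \<Otimes>\<^sub>M Pi\<^sub>M {t} (\<lambda>_. fun_borel))"
    by (rule measurable_compose[OF measurable_fst hist_iter_measurable]) auto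
  have "h \<in> borel_measurable (history_space t \<Otimes>\<^sub>M Pi\<^sub>M {t} (\<lambda>_. fun_borel))"
    unfolding h_def using measurable_dyadic_grad[OF snd_t iter] iter by measurable
  then have "(\<integral>\<^sup>+\<omega>. h (history t \<omega>, Y \<omega>) \<partial>M) \<le> ennreal (\<sigma>\<^sup>2)"
  proof (rule indep_var_nn_integral_le[OF indep_history_next[OF t, folded Y_def]])
    fix p
    have "(\<integral>\<^sup>+\<omega>. h (p, Y \<omega>) \<partial>M)
        = (\<integral>\<^sup>+\<omega>. ennreal ((dual_norm N (G t \<omega> (hist_iter p t) - g (hist_iter p t)))\<^sup>2) \<partial>M)"
      by (intro nn_integral_cong) (simp add: h_def Y_def dyadic_grad_F[OF t])
    also have "\<dots> \<le> ennreal (\<sigma>\<^sup>2)" using var t by blast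
    finally show "(\<integral>\<^sup>+\<omega>. h (p, Y \<omega>) \<partial>M) \<le> ennreal (\<sigma>\<^sup>2)" .
  qed
  also have "(\<integral>\<^sup>+\<omega>. h (history t \<omega>, Y \<omega>) \<partial>M)
      = (\<integral>\<^sup>+\<omega>. ennreal ((dual_norm N (grad_noise \<omega> t))\<^sup>2) \<partial>M)"
    using t path_eq_hist_iter[of t t]
    by (intro nn_integral_cong) (simp add: h_def Y_def grad_noise_def dyadic_grad_F)
  finally show ?thesis .
qed

lemma grad_noise_dual_norm_sq:
  assumes t: "t < T"
  shows "integrable M (\<lambda>\<omega>. (dual_norm N (grad_noise \<omega> t))\<^sup>2)
    \<and> expectation (\<lambda>\<omega>. (dual_norm N (grad_noise \<omega> t))\<^sup>2) \<le> \<sigma>\<^sup>2"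
proof
  show "integrable M (\<lambda>\<omega>. (dual_norm N (grad_noise \<omega> t))\<^sup>2)"
    using grad_noise_dual_norm_sq_nn_integral[OF t] grad_noise_measurable[OF t]
    by (intro integrableI_nonneg) (auto simp: top.not_eq_extremum intro: le_less_trans)
  show "expectation (\<lambda>\<omega>. (dual_norm N (grad_noise \<omega> t))\<^sup>2) \<le> \<sigma>\<^sup>2"
    by (rule integral_real_bounded[OF _ grad_noise_dual_norm_sq_nn_integral[OF t]]) simp
qed

lemma grad_noise_dual_norm:
  assumes t: "t < T"
  shows "integrable M (\<lambda>\<omega>. dual_norm N (grad_noise \<omega> t))
    \<and> expectation (\<lambda>\<omega>. dual_norm N (grad_noise \<omega> t)) \<le> \<sigma>"
proof -
  have meas: "(\<lambda>\<omega>. dual_norm N (grad_noise \<omega> t)) \<in> borel_measurable M"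
    using grad_noise_measurable[OF t] by measurable
  note moment = integral_le_sqrt_second_moment[OF meas grad_noise_dual_norm_sq[OF t, THEN conjunct1]]
  have "sqrt (expectation (\<lambda>\<omega>. (dual_norm N (grad_noise \<omega> t))\<^sup>2)) \<le> \<sigma>"
    using grad_noise_dual_norm_sq[OF t] sigma by (simp add: real_le_lsqrt)
  with moment show ?thesis by simp
qed

abbreviation dual_ratio :: real where "dual_ratio \<equiv> SUP y\<in>- {0}. dual_norm N y / norm y"
abbreviation norm_ratio :: real where "norm_ratio \<equiv> SUP y\<in>- {0}. norm y / dual_norm N y"

lemma grad_noise_norm_sq:
  assumes t: "t < T"
  shows "integrable M (\<lambda>\<omega>. (norm (grad_noise \<omega> t))\<^sup>2)
    \<and> expectation (\<lambda>\<omega>. (norm (grad_noise \<omega> t))\<^sup>2) \<le> norm_ratio\<^sup>2 * \<sigma>\<^sup>2"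
proof -
  have le: "(norm (grad_noise \<omega> t))\<^sup>2 \<le> norm_ratio\<^sup>2 * (dual_norm N (grad_noise \<omega> t))\<^sup>2" for \<omega>
    using norm_le_SUP_ratio[OF is_norm_dual_norm[OF norm], of "grad_noise \<omega> t"]
    by (simp add: power_mult_distrib[symmetric] power_mono)
  have dual: "integrable M (\<lambda>\<omega>. norm_ratio\<^sup>2 * (dual_norm N (grad_noise \<omega> t))\<^sup>2)"
    using grad_noise_dual_norm_sq[OF t] by simp
  have int: "integrable M (\<lambda>\<omega>. (norm (grad_noise \<omega> t))\<^sup>2)"
    by (rule Bochner_Integration.integrable_bound[OF dual])
       (use grad_noise_measurable[OF t] le in \<open>auto intro!: AE_I2\<close>)
  have "expectation (\<lambda>\<omega>. (norm (grad_noise \<omega> t))\<^sup>2)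
      \<le> expectation (\<lambda>\<omega>. norm_ratio\<^sup>2 * (dual_norm N (grad_noise \<omega> t))\<^sup>2)"
    by (rule integral_mono[OF int dual le])
  also have "\<dots> \<le> norm_ratio\<^sup>2 * \<sigma>\<^sup>2"
    using grad_noise_dual_norm_sq[OF t] by (simp add: mult_left_mono)
  finally show ?thesis using int by simp
qed

end

context stochastic_nsdm
begin

lemma ema_grad_noise_orthogonal:
  assumes t: "Suc t < T"
    and int: "integrable M (\<lambda>\<omega>. ema \<alpha> ((grad_noise \<omega>)(0 := 0)) t \<bullet> grad_noise \<omega> (Suc t))"
  shows "expectation (\<lambda>\<omega>. ema \<alpha> ((grad_noise \<omega>)(0 := 0)) t \<bullet> grad_noise \<omega> (Suc t)) = 0"
proof -
  define k where "k = Suc t"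
  have k: "k < T" "t < k" using t by (auto simp: k_def)
  define Y where "Y \<omega> = restrict (\<lambda>i. F i \<omega>) {k}" for \<omega>
  define h where "h q = ema \<alpha> ((hist_noise (fst q))(0 := 0)) t
      \<bullet> (dyadic_grad (snd q k) (hist_iter (fst q) k) - g (hist_iter (fst q) k))"
    for q :: "(nat \<Rightarrow> 'a \<Rightarrow> real) \<times> (nat \<Rightarrow> 'a \<Rightarrow> real)"
  let ?P = "history_space k \<Otimes>\<^sub>M Pi\<^sub>M {k} (\<lambda>_. fun_borel)"
  have snd_k: "(\<lambda>q. snd q k) \<in> measurable ?P fun_borel"
    by (rule measurable_compose[OF measurable_snd measurable_component_singleton]) auto
  have iter: "(\<lambda>q. hist_iter (fst q) k) \<in> borel_measurable ?P"
    by (rule measurable_compose[OF measurable_fst hist_iter_measurable]) auto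
  have "(\<lambda>p. ema \<alpha> ((hist_noise p)(0 := 0)) t) \<in> borel_measurable (history_space k)"
    using k hist_noise_measurable by (intro borel_measurable_ema) auto
  then have avg: "(\<lambda>q. ema \<alpha> ((hist_noise (fst q))(0 := 0)) t) \<in> borel_measurable ?P"
    by (rule measurable_compose[OF measurable_fst])
  have h: "h \<in> borel_measurable ?P"
    unfolding h_def using measurable_dyadic_grad[OF snd_k iter] iter avg by measurable
  have eq: "h (history k \<omega>, Y \<omega>) = ema \<alpha> ((grad_noise \<omega>)(0 := 0)) t \<bullet> grad_noise \<omega> k"
    if \<omega>: "\<omega> \<in> space M" for \<omega>
  proof -
    have "ema \<alpha> ((grad_noise \<omega>)(0 := 0)) t = ema \<alpha> ((hist_noise (history k \<omega>))(0 := 0)) t"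
      using k \<omega> by (intro ema_cong) (simp add: grad_noise_eq_hist_noise)
    then show ?thesis
      using path_eq_hist_iter[of k k \<omega>] k \<omega>
      by (simp add: h_def Y_def grad_noise_def dyadic_grad_F)
  qed
  have "expectation (\<lambda>\<omega>. h (history k \<omega>, Y \<omega>)) = 0"
  proof (rule indep_var_integral_eq_0[OF indep_history_next[OF k(1), folded Y_def] h])
    show "integrable M (\<lambda>\<omega>. h (history k \<omega>, Y \<omega>))"
      using int by (subst Bochner_Integration.integrable_cong[OF refl eq]) (auto simp: k_def)
    fix p
    define z where "z = ema \<alpha> ((hist_noise p)(0 := 0)) t"
    define x where "x = hist_iter p k"
    have G: "integrable M (\<lambda>\<omega>. G k \<omega> x)" "expectation (\<lambda>\<omega>. G k \<omega> x) = g x"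
      using unbiased k by auto
    have "expectation (\<lambda>\<omega>. h (p, Y \<omega>)) = expectation (\<lambda>\<omega>. z \<bullet> G k \<omega> x - z \<bullet> g x)"
      by (intro Bochner_Integration.integral_cong)
         (simp_all add: h_def Y_def dyadic_grad_F[OF k(1)] z_def x_def inner_diff_right)
    also have "\<dots> = 0" using G by (simp add: prob_space)
    finally show "expectation (\<lambda>\<omega>. h (p, Y \<omega>)) = 0" .
  qed
  moreover have "expectation (\<lambda>\<omega>. h (history k \<omega>, Y \<omega>))
      = expectation (\<lambda>\<omega>. ema \<alpha> ((grad_noise \<omega>)(0 := 0)) t \<bullet> grad_noise \<omega> k)"
    by (rule Bochner_Integration.integral_cong[OF refl eq])
  ultimately show ?thesis by (simp add: k_def)
qed

lemma ema0_grad_noise_dual_norm: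
  assumes t: "t < T"
  shows "integrable M (\<lambda>\<omega>. dual_norm N (ema \<alpha> ((grad_noise \<omega>)(0 := 0)) t))
    \<and> expectation (\<lambda>\<omega>. dual_norm N (ema \<alpha> ((grad_noise \<omega>)(0 := 0)) t)) \<le> sqrt \<alpha> * psi N * \<sigma>"
proof -
  define Z where "Z \<omega> = ema \<alpha> ((grad_noise \<omega>)(0 := 0)) t" for \<omega>
  have meas: "(\<lambda>\<omega>. ((grad_noise \<omega>)(0 := 0)) s) \<in> borel_measurable M" if "s \<le> t" for s
    using grad_noise_measurable[of s] that t by (cases "s = 0") auto
  have "integrable M (\<lambda>\<omega>. (norm (Z \<omega>))\<^sup>2) \<and> expectation (\<lambda>\<omega>. (norm (Z \<omega>))\<^sup>2) \<le> \<alpha> * (norm_ratio\<^sup>2 * \<sigma>\<^sup>2)"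
    unfolding Z_def
  proof (rule ema_second_moment_le[OF _ _ meas])
    show "integrable M (\<lambda>\<omega>. (norm (((grad_noise \<omega>)(0 := 0)) s))\<^sup>2)
      \<and> expectation (\<lambda>\<omega>. (norm (((grad_noise \<omega>)(0 := 0)) s))\<^sup>2) \<le> norm_ratio\<^sup>2 * \<sigma>\<^sup>2" if "s \<le> t" for s
      using grad_noise_norm_sq[of s] that t by (cases "s = 0") auto
    show "expectation (\<lambda>\<omega>. ema \<alpha> ((grad_noise \<omega>)(0 := 0)) s \<bullet> ((grad_noise \<omega>)(0 := 0)) (Suc s)) = 0"
      if "Suc s \<le> t"
        and "integrable M (\<lambda>\<omega>. ema \<alpha> ((grad_noise \<omega>)(0 := 0)) s \<bullet> ((grad_noise \<omega>)(0 := 0)) (Suc s))"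
      for s
      using ema_grad_noise_orthogonal[of s] that t by simp
  qed (use alpha in auto)
  then have sq: "integrable M (\<lambda>\<omega>. (norm (Z \<omega>))\<^sup>2)"
    and "sqrt (expectation (\<lambda>\<omega>. (norm (Z \<omega>))\<^sup>2)) \<le> sqrt (\<alpha> * (norm_ratio * \<sigma>)\<^sup>2)"
    by (auto simp: power_mult_distrib)
  moreover have "sqrt (\<alpha> * (norm_ratio * \<sigma>)\<^sup>2) = sqrt \<alpha> * norm_ratio * \<sigma>"
    using SUP_ratio_nonneg[OF is_norm_dual_norm[OF norm]] sigma by (simp add: real_sqrt_mult)
  moreover have Z: "Z \<in> borel_measurable M" unfolding Z_def using meas by (rule borel_measurable_ema)
  ultimately have norm_Z: "integrable M (\<lambda>\<omega>. norm (Z \<omega>))"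
    "expectation (\<lambda>\<omega>. norm (Z \<omega>)) \<le> sqrt \<alpha> * norm_ratio * \<sigma>"
    using integral_le_sqrt_second_moment[of "\<lambda>\<omega>. norm (Z \<omega>)"] by auto
  have le: "dual_norm N (Z \<omega>) \<le> dual_ratio * norm (Z \<omega>)" for \<omega>
    using is_norm_le_SUP_ratio[OF is_norm_dual_norm[OF norm]] .
  have int: "integrable M (\<lambda>\<omega>. dual_norm N (Z \<omega>))"
    by (rule Bochner_Integration.integrable_bound[of _ "\<lambda>\<omega>. dual_ratio * norm (Z \<omega>)"])
       (use norm_Z(1) Z le is_norm_nonneg[OF is_norm_dual_norm[OF norm]] in
        \<open>auto intro!: AE_I2 order_trans[OF _ abs_ge_self]\<close>)
  have "expectation (\<lambda>\<omega>. dual_norm N (Z \<omega>)) \<le> expectation (\<lambda>\<omega>. dual_ratio * norm (Z \<omega>))"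
    using norm_Z(1) by (intro integral_mono[OF int _ le]) simp
  also have "\<dots> \<le> dual_ratio * (sqrt \<alpha> * norm_ratio * \<sigma>)"
    using norm_Z(2) SUP_ratio_nonneg[OF is_norm_dual_norm[OF norm]] by (simp add: mult_left_mono)
  also have "\<dots> = sqrt \<alpha> * psi N * \<sigma>" by (simp add: psi_def)
  finally show ?thesis using int unfolding Z_def by simp
qed

lemma ema_grad_noise_dual_norm:
  assumes t: "t < T"
  shows "integrable M (\<lambda>\<omega>. dual_norm N (ema \<alpha> (grad_noise \<omega>) t))
    \<and> expectation (\<lambda>\<omega>. dual_norm N (ema \<alpha> (grad_noise \<omega>) t)) \<le> (1 - \<alpha>) ^ t * \<sigma> + \<sigma> * min 1 (sqrt \<alpha> * psi N)"
proof -
  let ?E = "expectation (\<lambda>\<omega>. dual_norm N (ema \<alpha> (grad_noise \<omega>) t))"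
  have convex: "integrable M (\<lambda>\<omega>. dual_norm N (ema \<alpha> (grad_noise \<omega>) t)) \<and> ?E \<le> \<sigma>"
    using t alpha
    by (intro integral_is_norm_ema_le[OF is_norm_dual_norm[OF norm]] grad_noise_measurable
        grad_noise_dual_norm) auto
  define Z where "Z \<omega> = ema \<alpha> ((grad_noise \<omega>)(0 := 0)) t" for \<omega>
  have le: "dual_norm N (ema \<alpha> (grad_noise \<omega>) t)
      \<le> dual_norm N (Z \<omega>) + (1 - \<alpha>) ^ t * dual_norm N (grad_noise \<omega> 0)" for \<omega>
    using is_norm_triangle[OF is_norm_dual_norm[OF norm], of "Z \<omega>" "(1 - \<alpha>) ^ t *\<^sub>R grad_noise \<omega> 0"] alpha
    by (simp add: Z_def ema_split_initial[of \<alpha> "grad_noise \<omega>"]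
        is_norm_scaleR[OF is_norm_dual_norm[OF norm]])
  have "?E \<le> expectation (\<lambda>\<omega>. dual_norm N (Z \<omega>) + (1 - \<alpha>) ^ t * dual_norm N (grad_noise \<omega> 0))"
    using convex ema0_grad_noise_dual_norm[OF t] grad_noise_dual_norm[of 0] t
    by (intro integral_mono le) (auto simp: Z_def)
  also have "\<dots> \<le> sqrt \<alpha> * psi N * \<sigma> + (1 - \<alpha>) ^ t * \<sigma>"
    using ema0_grad_noise_dual_norm[OF t] grad_noise_dual_norm[of 0] t alpha
    by (auto simp: Z_def intro!: add_mono mult_left_mono)
  finally have split: "?E \<le> (1 - \<alpha>) ^ t * \<sigma> + \<sigma> * (sqrt \<alpha> * psi N)"
    by (simp add: algebra_simps)
  have "0 \<le> (1 - \<alpha>) ^ t * \<sigma>" using alpha sigma by simp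
  then have "?E \<le> (1 - \<alpha>) ^ t * \<sigma> + min \<sigma> (\<sigma> * (sqrt \<alpha> * psi N))"
    using convex split by (simp add: min_def)
  then show ?thesis using convex sigma by (simp add: min_mult_distrib_left)
qed

end

section \<open>Convergence in expectation\<close>

lemma average_geometric_sum_le:
  fixes \<alpha> \<sigma> c :: real
  assumes "0 < \<alpha>" "\<alpha> \<le> 1" "0 \<le> \<sigma>" "0 < T"
  shows "2 / real T * (\<Sum>t<T. (1 - \<alpha>) ^ t * \<sigma> + c) \<le> 2 / (\<alpha> * real T) * \<sigma> + 2 * c"
proof -
  have "(\<Sum>t<T. (1 - \<alpha>) ^ t) = (1 - (1 - \<alpha>) ^ T) / \<alpha>"
    using assms sum_gp_strict[of "1 - \<alpha>" T] by simp
  also have "\<dots> \<le> 1 / \<alpha>" using assms by (intro divide_right_mono) auto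
  finally have "(\<Sum>t<T. (1 - \<alpha>) ^ t) * \<sigma> \<le> 1 / \<alpha> * \<sigma>" using assms by (intro mult_right_mono)
  have "2 / real T * (\<Sum>t<T. (1 - \<alpha>) ^ t * \<sigma> + c) = 2 / real T * ((\<Sum>t<T. (1 - \<alpha>) ^ t) * \<sigma>) + 2 * c"
    using assms by (simp add: sum.distrib sum_distrib_right distrib_left)
  also have "\<dots> \<le> 2 / real T * (1 / \<alpha> * \<sigma>) + 2 * c"
    using \<open>(\<Sum>t<T. (1 - \<alpha>) ^ t) * \<sigma> \<le> 1 / \<alpha> * \<sigma>\<close> by (intro add_right_mono mult_left_mono) auto
  finally show ?thesis by (simp add: mult.commute)
qed

theorem theorem4p3:
  fixes N :: "'a::euclidean_space \<Rightarrow> real"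
    and f :: "'a \<Rightarrow> real" and g :: "'a \<Rightarrow> 'a"
    and M :: "'w measure"
    and F :: "nat \<Rightarrow> 'w \<Rightarrow> 'a \<Rightarrow> real" and G :: "nat \<Rightarrow> 'w \<Rightarrow> 'a \<Rightarrow> 'a"
    and sel :: "nat \<Rightarrow> 'a \<Rightarrow> 'a"
    and \<alpha> \<eta> \<sigma> :: real and T :: nat and x0 :: "'a"
  assumes norm: "is_norm N"
    and alpha: "0 < \<alpha>" "\<alpha> < 1" and eta: "0 < \<eta>"
    and f_grad: "\<forall>x. (f has_derivative (\<lambda>h. g x \<bullet> h)) (at x)"
    and f_bdd: "bdd_below (range f)"
    and L_finite: "\<exists>L. \<forall>x y. dual_norm N (g x - g y) \<le> L * N (x - y)"
    and P: "prob_space M"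
    and F_grad: "\<forall>t<T. \<forall>\<omega>\<in>space M. \<forall>x. (F t \<omega> has_derivative (\<lambda>h. G t \<omega> x \<bullet> h)) (at x)"
    and F_meas: "\<forall>t<T. (\<lambda>(\<omega>, x). F t \<omega> x) \<in> borel_measurable (M \<Otimes>\<^sub>M borel)"
    and F_indep: "prob_space.indep_vars M (\<lambda>_. Pi\<^sub>M UNIV (\<lambda>_. borel)) F {..<T}"
    and unbiased: "\<forall>t<T. \<forall>x. integrable M (\<lambda>\<omega>. G t \<omega> x) \<and> (\<integral>\<omega>. G t \<omega> x \<partial>M) = g x"
    and sigma: "0 \<le> \<sigma>"
    and var: "\<forall>t<T. \<forall>x. (\<integral>\<^sup>+\<omega>. ennreal ((dual_norm N (G t \<omega> x - g x))\<^sup>2) \<partial>M) \<le> ennreal (\<sigma>\<^sup>2)"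
    and sel_max: "\<forall>t m. N (sel t m) \<le> 1 \<and> (\<forall>u. N u \<le> 1 \<longrightarrow> m \<bullet> u \<le> m \<bullet> sel t m)"
    and sel_meas: "\<forall>t. sel t \<in> borel_measurable borel"
  shows "(\<integral>\<^sup>+\<omega>. ennreal ((1 / real T) *
            (\<Sum>t<T. dual_norm N (g (fst (nsdm sel \<alpha> \<eta> x0 (\<lambda>s. G s \<omega>) t))))) \<partial>M)
         \<le> ennreal ((f x0 - Inf (range f)) / (\<eta> * real T)
              + 2 * \<eta> / \<alpha> * smooth_const N g
              + 2 / (\<alpha> * real T) * \<sigma>
              + 2 * \<sigma> * min 1 (sqrt \<alpha> * psi N))"
proof -
  interpret prob_space M by (rule P)
  define L where "L = smooth_const N g"
  have L: "0 \<le> L" "\<forall>x y. dual_norm N (g x - g y) \<le> L * N (x - y)"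
    using smooth_const_bound[OF norm L_finite] unfolding L_def by auto
  have descent: "nsdm_smooth N f g L sel \<alpha> \<eta>"
    by unfold_locales (use norm L alpha eta f_grad sel_max in auto)
  interpret S: stochastic_nsdm M N g F G sel \<alpha> \<eta> \<sigma> T x0
    using borel_measurable_gradient[OF f_grad]
    by unfold_locales (use norm alpha F_grad F_indep unbiased sigma var sel_meas in auto)
  show ?thesis
  proof (cases "T = 0")
    case False
    have B: "Inf (range f) \<le> f x" for x by (rule cInf_lower[OF _ f_bdd]) auto
    have "(1 / real T) * (\<Sum>t<T. dual_norm N (g (fst (nsdm sel \<alpha> \<eta> x0 (\<lambda>s. G s \<omega>) t))))
        \<le> (f x0 - Inf (range f)) / (\<eta> * real T) + 2 * \<eta> / \<alpha> * L
          + 2 / real T * (\<Sum>t<T. dual_norm N (ema \<alpha> (S.grad_noise \<omega>) t))" for \<omega>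
    proof -
      interpret nsdm_smooth N f g L sel \<alpha> \<eta> x0 "\<lambda>s. G s \<omega>" by (rule descent)
      have "S.grad_noise \<omega> = grad_noise" by (simp add: fun_eq_iff S.grad_noise_def S.path_def)
      then show ?thesis using average_dual_norm_grad_le[OF B] False by simp
    qed
    then have "(\<integral>\<^sup>+\<omega>. ennreal ((1 / real T) *
          (\<Sum>t<T. dual_norm N (g (fst (nsdm sel \<alpha> \<eta> x0 (\<lambda>s. G s \<omega>) t))))) \<partial>M)
        \<le> ennreal ((f x0 - Inf (range f)) / (\<eta> * real T) + 2 * \<eta> / \<alpha> * L
          + 2 / real T * (\<Sum>t<T. (1 - \<alpha>) ^ t * \<sigma> + \<sigma> * min 1 (sqrt \<alpha> * psi N)))"
      using S.ema_grad_noise_dual_norm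
      by (intro nn_integral_le_sum_expectation[where Y = "\<lambda>t \<omega>. dual_norm N (ema \<alpha> (S.grad_noise \<omega>) t)"])
         (auto intro!: divide_nonneg_nonneg sum_nonneg is_norm_nonneg[OF is_norm_dual_norm[OF norm]])
    also have "\<dots> \<le> ennreal ((f x0 - Inf (range f)) / (\<eta> * real T) + 2 * \<eta> / \<alpha> * L
          + 2 / (\<alpha> * real T) * \<sigma> + 2 * \<sigma> * min 1 (sqrt \<alpha> * psi N))"
      using average_geometric_sum_le[of \<alpha> \<sigma> T "\<sigma> * min 1 (sqrt \<alpha> * psi N)"] alpha sigma False
      by (intro ennreal_leI) (simp add: mult.assoc)
    finally show ?thesis unfolding L_def .
  qed simp
qed

end
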